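(* The exact category $\mathfrak{sl}(2)\text{-}\mathrm{Mod}_{\mathrm{tffr}}$ decomposes as the $\mathrm{Hom}$-orthogonal direct sum of the exact subcategories of generalized Casimir modules: $$\mathfrak{sl}(2)\text{-}\mathrm{Mod}_{\mathrm{tffr}}=\bigoplus_{\mu\in\mathbb{C}}\mathcal C^\bullet_{\mu,\mathrm{tffr}},$$ i.e. every finite rank torsion free module is a finite direct sum of $\mathfrak{sl}(2)$-submodules lying in $\mathcal C^\bullet_{\mu,\mathrm{tffr}}$ for pairwise distinct $\mu$, and $\mathrm{Hom}_{\mathfrak{sl}(2)}(A,B)=0$ for $A\in\mathcal C^\bullet_{\mu,\mathrm{tffr}}$, $B\in\mathcal C^\bullet_{\nu,\mathrm{tffr}}$, $\mu\neq\nu$. This is compatible with the coproduct decomposition $\mathcal C_{\mathrm{tffr}}=\coprod_{\mu\in\mathbb{C}}\mathcal C_{\mu,\mathrm{tffr}}$.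
   Context: $\mathfrak{sl}(2)$ has basis $L_{-1}=f$, $L_0=-\tfrac12 h$, $L_1=-e$ for a Chevalley basis $e,f,h$. Every $\mathfrak{sl}(2)$-module $(V,\rho)$ is a $\mathbb{C}[z]$-module via $z\cdot v=\rho(L_0)v$; $\mathfrak{sl}(2)\text{-}\mathrm{Mod}_{\mathrm{tffr}}$ is the full subcategory of modules that are torsion free as $\mathbb{C}[z]$-modules and of finite rank (finite $\mathbb{C}(z)$-dimension of the localization at $\mathbb{C}[z]\setminus\{0\}$), with the exact structure given by short exact sequences of $\mathfrak{sl}(2)$-modules with all terms in it. Casimir operator: $C_\rho=\rho(L_0)(\rho(L_0)-1)-\rho(L_{-1})\rho(L_1)$. $\mathcal C_{\mu,\mathrm{tffr}}$ (resp. $\mathcal C^\bullet_{\mu,\mathrm{tffr}}$) is the full subcategory of finite rank torsion free modules with $C_\rho=\mu\,\mathrm{Id}$ (resp. $(C_\rho-\mu)^n=0$ for some $n\ge1$); $\mathcal C_{\mathrm{tffr}}$ is the full subcategory of finite rank torsion free modules that are Casimir of some level. *)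

theory Defs
  imports Complex_Main "HOL-Computational_Algebra.Polynomial"
begin

text \<open>An sl(2)-module is modelled as a carrier subspace V of a complex vector space
  (given by a scalar multiplication s satisfying the library locale vector_space),
  together with the three operators Lm = rho(L_(-1)), L0 = rho(L_0), Lp = rho(L_1),
  which are linear on V, preserve V and satisfy [L_m,L_n] = (m-n) L_(m+n) on V.\<close>

definition lin_on :: "(complex \<Rightarrow> 'v::ab_group_add \<Rightarrow> 'v) \<Rightarrow> 'v set \<Rightarrow> ('v \<Rightarrow> 'w::ab_group_add) \<Rightarrow>
    (complex \<Rightarrow> 'w \<Rightarrow> 'w) \<Rightarrow> bool" where
  "lin_on s V f t \<longleftrightarrow>
     (\<forall>x\<in>V. \<forall>y\<in>V. f (x + y) = f x + f y) \<and> (\<forall>c. \<forall>x\<in>V. f (s c x) = t c (f x))"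

definition sl2_module :: "(complex \<Rightarrow> 'v::ab_group_add \<Rightarrow> 'v) \<Rightarrow> 'v set \<Rightarrow>
    ('v \<Rightarrow> 'v) \<Rightarrow> ('v \<Rightarrow> 'v) \<Rightarrow> ('v \<Rightarrow> 'v) \<Rightarrow> bool" where
  "sl2_module s V Lm L0 Lp \<longleftrightarrow>
     vector_space s \<and> module.subspace s V \<and>
     Lm ` V \<subseteq> V \<and> L0 ` V \<subseteq> V \<and> Lp ` V \<subseteq> V \<and>
     lin_on s V Lm s \<and> lin_on s V L0 s \<and> lin_on s V Lp s \<and>
     (\<forall>v\<in>V. L0 (Lm v) - Lm (L0 v) = Lm v) \<and>
     (\<forall>v\<in>V. L0 (Lp v) - Lp (L0 v) = - Lp v) \<and>
     (\<forall>v\<in>V. Lp (Lm v) - Lm (Lp v) = s 2 (L0 v))"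

definition poly_act :: "(complex \<Rightarrow> 'v::ab_group_add \<Rightarrow> 'v) \<Rightarrow> ('v \<Rightarrow> 'v) \<Rightarrow> complex poly \<Rightarrow> 'v \<Rightarrow> 'v" where
  "poly_act s L0 p v = (\<Sum>i\<le>degree p. s (coeff p i) ((L0 ^^ i) v))"

definition torsion_free :: "(complex \<Rightarrow> 'v::ab_group_add \<Rightarrow> 'v) \<Rightarrow> 'v set \<Rightarrow> ('v \<Rightarrow> 'v) \<Rightarrow> bool" where
  "torsion_free s V L0 \<longleftrightarrow> (\<forall>p v. p \<noteq> 0 \<longrightarrow> v \<in> V \<longrightarrow> v \<noteq> 0 \<longrightarrow> poly_act s L0 p v \<noteq> 0)"

definition poly_indep :: "(complex \<Rightarrow> 'v::ab_group_add \<Rightarrow> 'v) \<Rightarrow> ('v \<Rightarrow> 'v) \<Rightarrow> 'v list \<Rightarrow> bool" where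
  "poly_indep s L0 vs \<longleftrightarrow>
     (\<forall>ps. length ps = length vs \<longrightarrow>
        (\<Sum>i<length vs. poly_act s L0 (ps ! i) (vs ! i)) = 0 \<longrightarrow> (\<forall>i<length ps. ps ! i = 0))"

text \<open>Finite rank: bounded number of C[z]-linearly independent elements
  (= finite C(z)-dimension of the localization).\<close>
definition finite_rank :: "(complex \<Rightarrow> 'v::ab_group_add \<Rightarrow> 'v) \<Rightarrow> 'v set \<Rightarrow> ('v \<Rightarrow> 'v) \<Rightarrow> bool" where
  "finite_rank s V L0 \<longleftrightarrow>
     (\<exists>n::nat. \<forall>vs. set vs \<subseteq> V \<longrightarrow> poly_indep s L0 vs \<longrightarrow> length vs \<le> n)"

definition tffr_module :: "(complex \<Rightarrow> 'v::ab_group_add \<Rightarrow> 'v) \<Rightarrow> 'v set \<Rightarrow>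
    ('v \<Rightarrow> 'v) \<Rightarrow> ('v \<Rightarrow> 'v) \<Rightarrow> ('v \<Rightarrow> 'v) \<Rightarrow> bool" where
  "tffr_module s V Lm L0 Lp \<longleftrightarrow>
     sl2_module s V Lm L0 Lp \<and> torsion_free s V L0 \<and> finite_rank s V L0"

definition casimir :: "('v::ab_group_add \<Rightarrow> 'v) \<Rightarrow> ('v \<Rightarrow> 'v) \<Rightarrow> ('v \<Rightarrow> 'v) \<Rightarrow> 'v \<Rightarrow> 'v" where
  "casimir Lm L0 Lp v = L0 (L0 v) - L0 v - Lm (Lp v)"

definition gen_casimir_tffr :: "complex \<Rightarrow> (complex \<Rightarrow> 'v::ab_group_add \<Rightarrow> 'v) \<Rightarrow> 'v set \<Rightarrow>
    ('v \<Rightarrow> 'v) \<Rightarrow> ('v \<Rightarrow> 'v) \<Rightarrow> ('v \<Rightarrow> 'v) \<Rightarrow> bool" where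
  "gen_casimir_tffr \<mu> s V Lm L0 Lp \<longleftrightarrow>
     tffr_module s V Lm L0 Lp \<and>
     (\<exists>n::nat. n \<ge> 1 \<and>
        (\<forall>v\<in>V. ((\<lambda>x. casimir Lm L0 Lp x - s \<mu> x) ^^ n) v = 0))"

definition sl2_submodule :: "(complex \<Rightarrow> 'v::ab_group_add \<Rightarrow> 'v) \<Rightarrow> 'v set \<Rightarrow> 'v set \<Rightarrow>
    ('v \<Rightarrow> 'v) \<Rightarrow> ('v \<Rightarrow> 'v) \<Rightarrow> ('v \<Rightarrow> 'v) \<Rightarrow> bool" where
  "sl2_submodule s W V Lm L0 Lp \<longleftrightarrow>
     W \<subseteq> V \<and> module.subspace s W \<and> Lm ` W \<subseteq> W \<and> L0 ` W \<subseteq> W \<and> Lp ` W \<subseteq> W"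

definition sl2_hom :: "(complex \<Rightarrow> 'a::ab_group_add \<Rightarrow> 'a) \<Rightarrow> 'a set \<Rightarrow>
    ('a \<Rightarrow> 'a) \<Rightarrow> ('a \<Rightarrow> 'a) \<Rightarrow> ('a \<Rightarrow> 'a) \<Rightarrow>
    (complex \<Rightarrow> 'b::ab_group_add \<Rightarrow> 'b) \<Rightarrow> 'b set \<Rightarrow>
    ('b \<Rightarrow> 'b) \<Rightarrow> ('b \<Rightarrow> 'b) \<Rightarrow> ('b \<Rightarrow> 'b) \<Rightarrow> ('a \<Rightarrow> 'b) \<Rightarrow> bool" where
  "sl2_hom sA A Am A0 Ap sB B Bm B0 Bp f \<longleftrightarrow>
     f ` A \<subseteq> B \<and> lin_on sA A f sB \<and>
     (\<forall>v\<in>A. f (Am v) = Bm (f v)) \<and> (\<forall>v\<in>A. f (A0 v) = B0 (f v)) \<and>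
     (\<forall>v\<in>A. f (Ap v) = Bp (f v))"

end

(*
  The Casimir operator C commutes with L0, so polynomials Q(z, C) act on V with z acting as L0.
  Since V has finite rank and is torsion free, some nonzero Q annihilates V; choose Q minimal,
  first in its C-degree and then in the z-degree of its leading coefficient. Moving Q past
  Lp Lm = z^2 + z - C and Lm Lp = z^2 - z - C shows that Q(z + 1, C)(z^2 + z - C) and
  Q(z - 1, C)(z^2 - z - C) are multiples of Q up to factors from C[z]. For a generic non-real c
  the roots of Q(z, c) would therefore have to propagate along z + Z until they meet solutions
  of z^2 + z = c and z^2 - z = c, which forces c to be real. So Q does not depend on z: C is
  annihilated by a polynomial q. The generalized eigenspaces of C at the roots of q are
  sl(2)-submodules, and Bezout identities for the pairwise coprime factors (C - mu)^n split V
  into their direct sum. An sl(2)-homomorphism intertwines the Casimir operators, so its values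
  are killed by both (C - mu)^n and (C - nu)^m, which are coprime when mu and nu differ.
*)
theory Submission
  imports Defs "HOL-Computational_Algebra.Computational_Algebra" "HOL-Computational_Algebra.Field_as_Ring"
begin

locale vs_subspace = vector_space s for s :: "complex \<Rightarrow> 'v::ab_group_add \<Rightarrow> 'v" +
  fixes V :: "'v set"
  assumes subspace_V: "subspace V"
begin

lemma zero_in_V [simp]: "0 \<in> V" using subspace_V subspace_0 by blast
lemma add_in_V [simp]: "x \<in> V \<Longrightarrow> y \<in> V \<Longrightarrow> x + y \<in> V" using subspace_V subspace_add by blast
lemma diff_in_V [simp]: "x \<in> V \<Longrightarrow> y \<in> V \<Longrightarrow> x - y \<in> V" using subspace_V subspace_diff by blast
lemma neg_in_V [simp]: "x \<in> V \<Longrightarrow> - x \<in> V" using subspace_V subspace_neg by blast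
lemma scale_in_V [simp]: "x \<in> V \<Longrightarrow> s c x \<in> V" using subspace_V subspace_scale by blast
lemma sum_in_V [simp]: "(\<And>i. i \<in> A \<Longrightarrow> f i \<in> V) \<Longrightarrow> sum f A \<in> V"
  using subspace_V subspace_sum by blast

definition endo :: "('v \<Rightarrow> 'v) \<Rightarrow> bool" where
  "endo T \<longleftrightarrow> T ` V \<subseteq> V \<and> lin_on s V T s"

lemma endoI:
  "(\<And>v. v \<in> V \<Longrightarrow> T v \<in> V) \<Longrightarrow> (\<And>x y. x \<in> V \<Longrightarrow> y \<in> V \<Longrightarrow> T (x + y) = T x + T y)
    \<Longrightarrow> (\<And>c x. x \<in> V \<Longrightarrow> T (s c x) = s c (T x)) \<Longrightarrow> endo T"
  unfolding endo_def lin_on_def by auto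

context
  fixes T assumes T: "endo T"
begin

lemma endo_in [simp]: "v \<in> V \<Longrightarrow> T v \<in> V"
  using T unfolding endo_def by auto

lemma endo_add [simp]: "x \<in> V \<Longrightarrow> y \<in> V \<Longrightarrow> T (x + y) = T x + T y"
  using T unfolding endo_def lin_on_def by auto

lemma endo_scale [simp]: "x \<in> V \<Longrightarrow> T (s c x) = s c (T x)"
  using T unfolding endo_def lin_on_def by auto

lemma endo_0 [simp]: "T 0 = 0"
  using endo_scale[of 0 0] by simp

lemma endo_neg [simp]: "x \<in> V \<Longrightarrow> T (- x) = - T x"
  using endo_scale[of x "-1"] by simp

lemma endo_diff [simp]: "x \<in> V \<Longrightarrow> y \<in> V \<Longrightarrow> T (x - y) = T x - T y"
  using endo_add[of x "-y"] by (simp del: endo_add)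

lemma endo_sum [simp]: "(\<And>i. i \<in> A \<Longrightarrow> f i \<in> V) \<Longrightarrow> T (sum f A) = (\<Sum>i\<in>A. T (f i))"
  by (induct A rule: infinite_finite_induct) auto

lemma funpow_in_V [simp]: "v \<in> V \<Longrightarrow> (T ^^ n) v \<in> V"
  by (induct n) auto

end

lemma endo_funpow: "endo T \<Longrightarrow> endo (T ^^ n)"
  by (induct n) (auto intro!: endoI simp del: funpow.simps simp: funpow_Suc_right)

lemma endo_minus: "endo T \<Longrightarrow> endo S \<Longrightarrow> endo (\<lambda>v. T v - S v)"
  by (intro endoI) (auto simp: algebra_simps)

lemma endo_scalar: "endo (\<lambda>v. s c v)"
  by (intro endoI) (auto simp: algebra_simps)

lemma funpow_commute:
  "endo T \<Longrightarrow> endo S \<Longrightarrow> (\<And>v. v \<in> V \<Longrightarrow> S (T v) = T (S v)) \<Longrightarrow> v \<in> V \<Longrightarrow>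
    S ((T ^^ n) v) = (T ^^ n) (S v)"
  by (induct n arbitrary: v) auto

abbreviation pact :: "('v \<Rightarrow> 'v) \<Rightarrow> complex poly \<Rightarrow> 'v \<Rightarrow> 'v" where
  "pact T p v \<equiv> poly_act s T p v"

lemma pact_eq_sum: "degree p < n \<Longrightarrow> pact T p v = (\<Sum>i<n. s (coeff p i) ((T ^^ i) v))"
  unfolding poly_act_def by (rule sum.mono_neutral_left) (auto simp: coeff_eq_0)

lemma pact_add: "pact T (p + q) v = pact T p v + pact T q v"
proof -
  let ?n = "Suc (max (degree p) (degree q))"
  have "degree (p + q) < ?n" using degree_add_le_max[of p q] by simp
  moreover have "degree p < ?n" "degree q < ?n" by auto
  ultimately show ?thesis using pact_eq_sum[where n="?n"]
    by (simp add: scale_left_distrib sum.distrib del: sum.lessThan_Suc)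
qed

lemma pact_smult: "pact T (smult a p) v = s a (pact T p v)"
proof -
  have "degree p < Suc (degree p)" "degree (smult a p) < Suc (degree p)" by auto
  then show ?thesis using pact_eq_sum[where n="Suc (degree p)"]
    by (simp add: scale_sum_right del: sum.lessThan_Suc)
qed

lemma pact_0 [simp]: "pact T 0 v = 0" by (simp add: poly_act_def)
lemma pact_const [simp]: "pact T [:c:] v = s c v" by (simp add: poly_act_def)
lemma pact_1 [simp]: "pact T 1 v = v" by (simp add: poly_act_def one_pCons)

lemma pact_neg: "pact T (- p) v = - pact T p v"
  using pact_smult[of T "-1" p v] by simp

context
  fixes T assumes T: "endo T"
begin

lemma pact_in [simp]: "v \<in> V \<Longrightarrow> pact T p v \<in> V"
  unfolding poly_act_def using T by auto

lemma endo_pact: "endo (pact T p)"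
proof (rule endoI)
  fix x y assume "x \<in> V" "y \<in> V"
  then show "pact T p (x + y) = pact T p x + pact T p y"
    unfolding poly_act_def using T endo_add[OF endo_funpow[OF T]]
    by (simp add: sum.distrib scale_right_distrib)
next
  fix c x assume "x \<in> V"
  then show "pact T p (s c x) = s c (pact T p x)"
    unfolding poly_act_def using T endo_scale[OF endo_funpow[OF T]]
    by (simp add: scale_sum_right mult.commute)
qed (use T in auto)

lemma pact_0_right [simp]: "pact T p 0 = 0"
  using endo_0[OF endo_pact] .

lemma pact_pCons: "v \<in> V \<Longrightarrow> pact T (pCons a p) v = s a v + T (pact T p v)"
proof -
  assume v: "v \<in> V"
  let ?n = "Suc (degree p)"
  have "degree (pCons a p) < Suc ?n" by (simp add: degree_pCons_le le_imp_less_Suc)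
  then have "pact T (pCons a p) v = (\<Sum>i<Suc ?n. s (coeff (pCons a p) i) ((T ^^ i) v))"
    by (rule pact_eq_sum)
  also have "\<dots> = s a v + (\<Sum>i<?n. s (coeff p i) ((T ^^ Suc i) v))"
    by (simp add: sum.lessThan_Suc_shift del: sum.lessThan_Suc)
  also have "(\<Sum>i<?n. s (coeff p i) ((T ^^ Suc i) v)) = T (pact T p v)"
    using pact_eq_sum[of p ?n T v] v T by (simp del: sum.lessThan_Suc)
  finally show ?thesis .
qed

lemma pact_linear: "v \<in> V \<Longrightarrow> pact T [:a, 1:] v = s a v + T v"
  using pact_pCons[of v a 1] by (simp add: one_pCons[symmetric])

lemma pact_mult: "v \<in> V \<Longrightarrow> pact T (p * q) v = pact T p (pact T q v)"
proof (induct p arbitrary: v)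
  case (pCons a p)
  have "pact T (pCons a p * q) v = s a (pact T q v) + pact T (pCons 0 (p * q)) v"
    by (simp add: pact_add pact_smult)
  also have "pact T (pCons 0 (p * q)) v = T (pact T p (pact T q v))"
    using pCons by (simp add: pact_pCons)
  finally show ?case using pCons by (simp add: pact_pCons)
qed simp

lemma pact_commute:
  assumes S: "endo S" and ST: "\<And>v. v \<in> V \<Longrightarrow> S (T v) = T (S v)" and v: "v \<in> V"
  shows "S (pact T p v) = pact T p (S v)"
  unfolding poly_act_def using T S v by (simp add: funpow_commute[OF T S ST])

lemma pact_linear_power: "v \<in> V \<Longrightarrow> pact T ([:-\<mu>, 1:] ^ n) v = ((\<lambda>x. T x - s \<mu> x) ^^ n) v"
proof (induct n arbitrary: v)
  case (Suc n)
  have "pact T ([:-\<mu>, 1:] ^ Suc n) v = pact T [:-\<mu>, 1:] (pact T ([:-\<mu>, 1:] ^ n) v)"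
    by (simp only: power_Suc pact_mult[OF Suc.prems])
  also have "\<dots> = pact T [:-\<mu>, 1:] (((\<lambda>x. T x - s \<mu> x) ^^ n) v)"
    using Suc by simp
  finally show ?case
    using pact_linear funpow_in_V[OF endo_minus[OF T endo_scalar] Suc.prems] by simp
qed simp

text \<open>Here pcompose p [:-a, 1:] is p(z - a): from T S = S (T + a) we get p(T - a) S = S p(T).\<close>
lemma pact_pcompose_shift:
  assumes S: "endo S" and TS: "\<And>v. v \<in> V \<Longrightarrow> T (S v) = S (T v) + s a (S v)"
  shows "v \<in> V \<Longrightarrow> pact T (pcompose p [:-a, 1:]) (S v) = S (pact T p v)"
proof (induct p arbitrary: v)
  case (pCons b p)
  have "pact T (pcompose (pCons b p) [:-a, 1:]) (S v)
     = s b (S v) + pact T [:-a,1:] (pact T (pcompose p [:- a, 1:]) (S v))"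
    using pCons S by (simp only: pcompose_pCons pact_add pact_mult pact_const endo_in)
  also have "\<dots> = s b (S v) + (s (-a) (S (pact T p v)) + T (S (pact T p v)))"
    using pCons S by (simp add: pact_linear)
  also have "\<dots> = S (pact T (pCons b p) v)"
    using pCons S T by (simp add: pact_pCons TS)
  finally show ?case .
qed (use S in simp)

end

end

lemma degree_map_poly_le: "f 0 = 0 \<Longrightarrow> degree (map_poly f p) \<le> degree p"
  by (rule degree_le) (auto simp: coeff_map_poly coeff_eq_0)

locale sl2 = vs_subspace s V for s :: "complex \<Rightarrow> 'v::ab_group_add \<Rightarrow> 'v" and V +
  fixes Lm L0 Lp
  assumes sl2_module: "sl2_module s V Lm L0 Lp"
begin

lemma endo_Lm: "endo Lm" and endo_L0: "endo L0" and endo_Lp: "endo Lp"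
  using sl2_module unfolding sl2_module_def endo_def by blast+

lemmas sl2_simps [simp] = endo_in[OF endo_Lm] endo_in[OF endo_L0] endo_in[OF endo_Lp]
  endo_add[OF endo_Lm] endo_add[OF endo_L0] endo_add[OF endo_Lp]
  endo_diff[OF endo_Lm] endo_diff[OF endo_L0] endo_diff[OF endo_Lp]
  endo_neg[OF endo_Lm] endo_neg[OF endo_L0] endo_neg[OF endo_Lp]
  endo_scale[OF endo_Lm] endo_scale[OF endo_L0] endo_scale[OF endo_Lp]

lemma L0_Lm: "v \<in> V \<Longrightarrow> L0 (Lm v) = Lm (L0 v) + Lm v"
  and L0_Lp: "v \<in> V \<Longrightarrow> L0 (Lp v) = Lp (L0 v) - Lp v"
  and Lp_Lm: "v \<in> V \<Longrightarrow> Lp (Lm v) = Lm (Lp v) + (L0 v + L0 v)"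
proof -
  assume v: "v \<in> V"
  have "s 2 (L0 v) = L0 v + L0 v"
    using scale_left_distrib[of 1 1 "L0 v"] by simp
  then show "L0 (Lm v) = Lm (L0 v) + Lm v" "L0 (Lp v) = Lp (L0 v) - Lp v"
    "Lp (Lm v) = Lm (Lp v) + (L0 v + L0 v)"
    using sl2_module v unfolding sl2_module_def by (simp_all add: eq_diff_eq diff_eq_eq)
qed

definition Cas :: "'v \<Rightarrow> 'v" where
  "Cas = casimir Lm L0 Lp"

lemma Cas_eq: "Cas v = L0 (L0 v) - L0 v - Lm (Lp v)"
  unfolding Cas_def casimir_def by simp

lemma endo_Cas: "endo Cas"
  by (rule endoI) (simp_all add: Cas_eq algebra_simps)

lemma Cas_commute_L0: "v \<in> V \<Longrightarrow> Cas (L0 v) = L0 (Cas v)"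
proof -
  assume v: "v \<in> V"
  have "L0 (Lm (Lp v)) = Lm (L0 (Lp v)) + Lm (Lp v)" using v by (simp add: L0_Lm)
  also have "\<dots> = Lm (Lp (L0 v))" using v by (simp add: L0_Lp)
  finally show ?thesis unfolding Cas_eq using v by simp
qed

lemma Cas_commute_Lp: "v \<in> V \<Longrightarrow> Cas (Lp v) = Lp (Cas v)"
proof -
  assume v: "v \<in> V"
  have "Lp (Lm (Lp v)) = Lm (Lp (Lp v)) + (L0 (Lp v) + L0 (Lp v))" using v by (simp add: Lp_Lm)
  then show ?thesis unfolding Cas_eq using v
    by (simp add: L0_Lp algebra_simps L0_Lp[OF endo_in[OF endo_L0 v]])
qed

lemma Cas_commute_Lm: "v \<in> V \<Longrightarrow> Cas (Lm v) = Lm (Cas v)"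
proof -
  assume v: "v \<in> V"
  have "Lm (Lp (Lm v)) = Lm (Lm (Lp v)) + (Lm (L0 v) + Lm (L0 v))" using v by (simp add: Lp_Lm)
  then show ?thesis unfolding Cas_eq using v
    by (simp add: L0_Lm algebra_simps L0_Lm[OF endo_in[OF endo_L0 v]])
qed

lemma Lp_Lm_eq_Cas: "v \<in> V \<Longrightarrow> Lp (Lm v) = L0 (L0 v) + L0 v - Cas v"
  unfolding Cas_eq using Lp_Lm[of v] by (simp add: algebra_simps)

lemma Lm_Lp_eq_Cas: "v \<in> V \<Longrightarrow> Lm (Lp v) = L0 (L0 v) - L0 v - Cas v"
  unfolding Cas_eq by simp

lemma pact_L0_commute_Cas: "v \<in> V \<Longrightarrow> Cas (pact L0 p v) = pact L0 p (Cas v)"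
  by (rule pact_commute[OF endo_L0 endo_Cas]) (auto simp: Cas_commute_L0)

text \<open>A polynomial Q in the Casimir variable with coefficients in C[z] acts on V by
  z \<mapsto> L0 and C \<mapsto> Cas; since Cas commutes with L0 this is an action of the ring C[z,C].\<close>
definition bact :: "complex poly poly \<Rightarrow> 'v \<Rightarrow> 'v" where
  "bact Q v = (\<Sum>k\<le>degree Q. pact L0 (coeff Q k) ((Cas ^^ k) v))"

lemma bact_eq_sum: "degree Q < n \<Longrightarrow> bact Q v = (\<Sum>k<n. pact L0 (coeff Q k) ((Cas ^^ k) v))"
  unfolding bact_def by (rule sum.mono_neutral_left) (auto simp: coeff_eq_0)

lemma bact_0 [simp]: "bact 0 v = 0"
  by (simp add: bact_def)

lemma bact_add: "bact (P + Q) v = bact P v + bact Q v"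
proof -
  let ?n = "Suc (max (degree P) (degree Q))"
  have "degree (P + Q) < ?n" using degree_add_le_max[of P Q] by simp
  moreover have "degree P < ?n" "degree Q < ?n" by auto
  ultimately show ?thesis using bact_eq_sum[where n="?n"]
    by (simp add: pact_add sum.distrib del: sum.lessThan_Suc)
qed

lemma bact_diff: "bact (P - Q) v = bact P v - bact Q v"
proof -
  have "bact (P - Q) v + bact Q v = bact P v"
    using bact_add[of "P - Q" Q v] by simp
  then show ?thesis by (simp add: eq_diff_eq)
qed

lemma bact_in [simp]: "v \<in> V \<Longrightarrow> bact Q v \<in> V"
  unfolding bact_def using endo_L0 endo_Cas by simp

lemma endo_bact: "endo (bact Q)"
proof (rule endoI)
  fix x y assume "x \<in> V" "y \<in> V"
  then show "bact Q (x + y) = bact Q x + bact Q y"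
    unfolding bact_def using endo_add[OF endo_pact[OF endo_L0]] endo_add[OF endo_funpow[OF endo_Cas]]
      funpow_in_V[OF endo_Cas]
    by (simp add: sum.distrib)
next
  fix c x assume "x \<in> V"
  then show "bact Q (s c x) = s c (bact Q x)"
    unfolding bact_def using endo_scale[OF endo_pact[OF endo_L0]] endo_scale[OF endo_funpow[OF endo_Cas]]
      funpow_in_V[OF endo_Cas]
    by (simp add: scale_sum_right)
qed simp

lemma bact_0_right [simp]: "bact Q 0 = 0"
  using endo_0[OF endo_bact] .

lemma bact_smult: "v \<in> V \<Longrightarrow> bact (smult a Q) v = pact L0 a (bact Q v)"
proof -
  assume v: "v \<in> V"
  have d: "degree (smult a Q) < Suc (degree Q)" "degree Q < Suc (degree Q)" by auto
  have "bact (smult a Q) v = (\<Sum>k<Suc (degree Q). pact L0 a (pact L0 (coeff Q k) ((Cas ^^ k) v)))"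
    using bact_eq_sum[OF d(1)] v endo_Cas by (simp add: pact_mult[OF endo_L0] del: sum.lessThan_Suc)
  also have "\<dots> = pact L0 a (bact Q v)"
    using bact_eq_sum[OF d(2)] v endo_Cas endo_L0 by (simp add: endo_pact del: sum.lessThan_Suc)
  finally show ?thesis .
qed

lemma bact_pCons: "v \<in> V \<Longrightarrow> bact (pCons a Q) v = pact L0 a v + Cas (bact Q v)"
proof -
  assume v: "v \<in> V"
  let ?n = "Suc (degree Q)"
  have "degree (pCons a Q) < Suc ?n" by (simp add: degree_pCons_le le_imp_less_Suc)
  then have "bact (pCons a Q) v = (\<Sum>k<Suc ?n. pact L0 (coeff (pCons a Q) k) ((Cas ^^ k) v))"
    by (rule bact_eq_sum)
  also have "\<dots> = pact L0 a v + (\<Sum>k<?n. pact L0 (coeff Q k) (Cas ((Cas ^^ k) v)))"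
    by (simp add: sum.lessThan_Suc_shift del: sum.lessThan_Suc)
  also have "(\<Sum>k<?n. pact L0 (coeff Q k) (Cas ((Cas ^^ k) v))) = Cas (bact Q v)"
    using bact_eq_sum[of Q ?n v] v endo_Cas endo_L0
    by (simp add: pact_L0_commute_Cas del: sum.lessThan_Suc)
  finally show ?thesis .
qed

lemma bact_const: "v \<in> V \<Longrightarrow> bact [:p:] v = pact L0 p v"
  using bact_pCons[of v p 0] endo_Cas by simp

lemma bact_mult: "v \<in> V \<Longrightarrow> bact (P * Q) v = bact P (bact Q v)"
proof (induct P arbitrary: v)
  case (pCons a P)
  have "bact (pCons a P * Q) v = pact L0 a (bact Q v) + bact (pCons 0 (P * Q)) v"
    using pCons by (simp add: bact_add bact_smult)
  also have "bact (pCons 0 (P * Q)) v = Cas (bact P (bact Q v))"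
    using pCons by (simp add: bact_pCons)
  finally show ?case using pCons by (simp add: bact_pCons)
qed simp

lemma bact_commute_pact: "v \<in> V \<Longrightarrow> bact Q (pact L0 p v) = pact L0 p (bact Q v)"
  by (metis bact_const bact_in bact_mult mult.commute pact_in[OF endo_L0])

lemma bact_pcompose_shift:
  assumes S: "endo S" and L0S: "\<And>v. v \<in> V \<Longrightarrow> L0 (S v) = S (L0 v) + s a (S v)"
    and CasS: "\<And>v. v \<in> V \<Longrightarrow> S (Cas v) = Cas (S v)" and v: "v \<in> V"
  shows "bact (map_poly (\<lambda>q. pcompose q [:-a, 1:]) Q) (S v) = S (bact Q v)"
proof -
  let ?n = "Suc (degree Q)"
  have d: "degree (map_poly (\<lambda>q. pcompose q [:-a, 1:]) Q) < ?n" "degree Q < ?n"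
    using degree_map_poly_le[of "\<lambda>q. pcompose q [:-a, 1:]" Q] by (auto simp: pcompose_0)
  have "pact L0 (pcompose (coeff Q k) [:-a, 1:]) ((Cas ^^ k) (S v))
      = S (pact L0 (coeff Q k) ((Cas ^^ k) v))" for k
  proof -
    have "(Cas ^^ k) (S v) = S ((Cas ^^ k) v)"
      using funpow_commute[OF endo_Cas S CasS v] by simp
    then show ?thesis using pact_pcompose_shift[OF endo_L0 S L0S] v endo_Cas by simp
  qed
  then show ?thesis using bact_eq_sum[OF d(1)] bact_eq_sum[OF d(2)] S v endo_L0 endo_Cas
    by (simp add: coeff_map_poly del: sum.lessThan_Suc)
qed

lemma bact_map_poly_const: "bact (map_poly (\<lambda>c. [:c:]) q) v = pact Cas q v"
proof -
  have d: "degree (map_poly (\<lambda>c. [:c:]) q) < Suc (degree q)" "degree q < Suc (degree q)"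
    using degree_map_poly_le[of "\<lambda>c. [:c:]" q] by auto
  show ?thesis
    using bact_eq_sum[OF d(1)] pact_eq_sum[OF d(2)] by (simp add: coeff_map_poly del: sum.lessThan_Suc)
qed

end

context vs_subspace
begin

lemma poly_indep_snoc_dependent:
  assumes indep: "poly_indep s T es" and dep: "\<not> poly_indep s T (es @ [v])"
  obtains p ps where "p \<noteq> 0" "pact T p v = - (\<Sum>i<length es. pact T (ps ! i) (es ! i))"
proof -
  let ?m = "length es"
  obtain ps where ps: "length ps = Suc ?m"
    "(\<Sum>i<Suc ?m. pact T (ps ! i) ((es @ [v]) ! i)) = 0" "\<exists>i<length ps. ps ! i \<noteq> 0"
    using dep unfolding poly_indep_def by auto
  have split: "(\<Sum>i<?m. pact T (ps ! i) (es ! i)) + pact T (ps ! ?m) v = 0"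
    using ps(2) by (simp add: nth_append)
  have "ps ! ?m \<noteq> 0"
  proof
    assume last: "ps ! ?m = 0"
    then have "(\<Sum>i<?m. pact T (take ?m ps ! i) (es ! i)) = 0"
      using split by simp
    then have "\<forall>i<length (take ?m ps). take ?m ps ! i = 0"
      using indep ps(1) unfolding poly_indep_def by auto
    then have "\<forall>i<?m. ps ! i = 0" using ps(1) by auto
    then show False using ps(1,3) last by (metis less_Suc_eq)
  qed
  moreover have "pact T (ps ! ?m) v = - (\<Sum>i<?m. pact T (ps ! i) (es ! i))"
    using split by (simp add: eq_neg_iff_add_eq_0 add.commute)
  ultimately show ?thesis by (rule that)
qed

end

locale tffr = sl2 s V Lm L0 Lp for s :: "complex \<Rightarrow> 'v::ab_group_add \<Rightarrow> 'v" and V Lm L0 Lp +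
  assumes torsion_free: "torsion_free s V L0" and finite_rank: "finite_rank s V L0"
begin

lemma torsion_freeD: "p \<noteq> 0 \<Longrightarrow> v \<in> V \<Longrightarrow> pact L0 p v = 0 \<Longrightarrow> v = 0"
  using torsion_free unfolding torsion_free_def by blast

lemma Cas_orbit_dependent:
  assumes e: "e \<in> V"
  obtains Q where "Q \<noteq> 0" "bact Q e = 0"
proof -
  obtain n where n: "\<forall>vs. set vs \<subseteq> V \<longrightarrow> poly_indep s L0 vs \<longrightarrow> length vs \<le> n"
    using finite_rank unfolding finite_rank_def by blast
  let ?vs = "map (\<lambda>k. (Cas ^^ k) e) [0..<Suc n]"
  have "set ?vs \<subseteq> V" using e endo_Cas by auto
  then have "\<not> poly_indep s L0 ?vs" using n by fastforce
  then obtain ps where ps: "length ps = Suc n"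
    "(\<Sum>i<Suc n. pact L0 (ps ! i) (?vs ! i)) = 0" "\<exists>i<length ps. ps ! i \<noteq> 0"
    unfolding poly_indep_def by auto
  have "degree (Poly ps) < Suc (Suc n)" using degree_Poly[of ps] ps(1) by simp
  then have "bact (Poly ps) e = (\<Sum>k<Suc (Suc n). pact L0 (nth_default 0 ps k) ((Cas ^^ k) e))"
    by (simp add: bact_eq_sum)
  also have "\<dots> = (\<Sum>k<Suc n. pact L0 (ps ! k) (?vs ! k))"
    using ps(1) by (simp add: nth_default_def del: upt_Suc)
  finally have "bact (Poly ps) e = 0" using ps(2) by simp
  moreover have "Poly ps \<noteq> 0"
    using ps(3) by (metis coeff_0 coeff_Poly_eq nth_default_nth)
  ultimately show ?thesis using that by blast
qed

definition Ann :: "complex poly poly set" where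
  "Ann = {Q. \<forall>v\<in>V. bact Q v = 0}"

lemma Ann_mult_left: "Q \<in> Ann \<Longrightarrow> R * Q \<in> Ann"
  unfolding Ann_def by (simp add: bact_mult)

lemma Ann_mult_right: "Q \<in> Ann \<Longrightarrow> Q * R \<in> Ann"
  using Ann_mult_left[of Q R] by (simp add: mult.commute)

lemma Ann_diff: "Q \<in> Ann \<Longrightarrow> R \<in> Ann \<Longrightarrow> Q - R \<in> Ann"
  unfolding Ann_def by (simp add: bact_diff)

lemma Ann_smult: "Q \<in> Ann \<Longrightarrow> smult a Q \<in> Ann"
  unfolding Ann_def using endo_0[OF endo_pact[OF endo_L0]] by (simp add: bact_smult)

lemma Ann_smult_cancel:
  assumes pQ: "smult p Q \<in> Ann" and p: "p \<noteq> 0"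
  shows "Q \<in> Ann"
  unfolding Ann_def
proof (intro CollectI ballI)
  fix v assume v: "v \<in> V"
  then have "pact L0 p (bact Q v) = 0" using pQ by (simp add: Ann_def bact_smult)
  then show "bact Q v = 0" using torsion_freeD[OF p bact_in[OF v]] by blast
qed

text \<open>Take a maximal C[z]-independent family es. The product of relations for the Cas-orbits of
  its members kills es, hence, by torsion freeness, every vector that depends on es.\<close>
lemma Ann_nontrivial: "\<exists>Q. Q \<noteq> 0 \<and> Q \<in> Ann"
proof -
  obtain n where n: "\<forall>vs. set vs \<subseteq> V \<longrightarrow> poly_indep s L0 vs \<longrightarrow> length vs \<le> n"
    using finite_rank unfolding finite_rank_def by blast
  have "\<forall>e\<in>V. \<exists>Q. Q \<noteq> 0 \<and> bact Q e = 0"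
    using Cas_orbit_dependent by blast
  then obtain Qf where Qf: "\<And>e. e \<in> V \<Longrightarrow> Qf e \<noteq> 0 \<and> bact (Qf e) e = 0"
    by metis
  let ?P = "\<lambda>vs. set vs \<subseteq> V \<and> poly_indep s L0 vs"
  obtain es where es: "?P es" and es_max: "\<And>vs. ?P vs \<Longrightarrow> length vs \<le> length es"
    using ex_has_greatest_nat[of ?P "[]" length "Suc n"] n by (fastforce simp: poly_indep_def)
  define Q where "Q = prod Qf (set es)"
  have "Q \<noteq> 0" unfolding Q_def using Qf es by (auto simp: prod_zero_iff)
  have Q_es: "bact Q e = 0" if e: "e \<in> set es" for e
  proof -
    have "Q = prod Qf (set es - {e}) * Qf e"
      unfolding Q_def using e by (simp add: prod.remove mult.commute)
    moreover have "e \<in> V" using e es by blast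
    ultimately show ?thesis using Qf by (simp add: bact_mult)
  qed
  have "bact Q v = 0" if v: "v \<in> V" for v
  proof -
    have "\<not> poly_indep s L0 (es @ [v])" using es_max[of "es @ [v]"] es v by auto
    then obtain p ps where p: "p \<noteq> 0" and pv: "pact L0 p v = - (\<Sum>i<length es. pact L0 (ps ! i) (es ! i))"
      using poly_indep_snoc_dependent es by blast
    define t where "t i = pact L0 (ps ! i) (es ! i)" for i
    have t_V: "\<And>i. i \<in> {..<length es} \<Longrightarrow> t i \<in> V"
      unfolding t_def using es nth_mem by (blast intro: pact_in[OF endo_L0])
    have "pact L0 p (bact Q v) = bact Q (pact L0 p v)"
      using v by (simp add: bact_commute_pact)
    also have "\<dots> = - bact Q (sum t {..<length es})"
      unfolding pv t_def[symmetric] by (intro endo_neg[OF endo_bact] sum_in_V t_V)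
    also have "bact Q (sum t {..<length es}) = (\<Sum>i<length es. bact Q (t i))"
      by (intro endo_sum[OF endo_bact] t_V)
    also have "(\<Sum>i<length es. bact Q (t i)) = (\<Sum>i<length es. pact L0 (ps ! i) (bact Q (es ! i)))"
      unfolding t_def using es nth_mem by (intro sum.cong refl bact_commute_pact) blast
    also have "\<dots> = 0" using Q_es by (simp add: pact_0_right[OF endo_L0])
    finally have "pact L0 p (bact Q v) = 0" by simp
    then show ?thesis using torsion_freeD[OF p bact_in[OF v]] by blast
  qed
  with \<open>Q \<noteq> 0\<close> show ?thesis unfolding Ann_def by blast
qed

end

text \<open>For Q in C[z][C], poly Q [:c:] is the specialization Q(z, c) of the Casimir variable.\<close>
lemma poly_map_poly_pcompose_const:
  "poly (map_poly (\<lambda>q. pcompose q r) Q) [:c:] = pcompose (poly Q [:c:]) r"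
  by (induct Q) (simp_all add: map_poly_pCons pcompose_0 pcompose_add pcompose_mult pcompose_smult)

lemma poly_poly_const: "poly (poly Q [:c:]) z = poly (map_poly (\<lambda>q. poly q z) Q) c"
  by (induct Q) (simp_all add: map_poly_pCons)

lemma coeff_poly_const: "coeff (poly Q [:c:]) j = poly (map_poly (\<lambda>q. coeff q j) Q) c"
  by (induct Q) (simp_all add: map_poly_pCons)

lemma eq_map_poly_const_if_infinite_const_specializations:
  fixes Q :: "'a::idom poly poly"
  assumes inf: "infinite {c. degree (poly Q [:c:]) = 0}"
  shows "Q = map_poly (\<lambda>x. [:x:]) (map_poly (\<lambda>p. coeff p 0) Q)"
proof -
  have coeff_coeff: "coeff (coeff Q k) j = 0" if j: "j > 0" for j k
  proof -
    have "{c. degree (poly Q [:c:]) = 0} \<subseteq> {c. poly (map_poly (\<lambda>q. coeff q j) Q) c = 0}"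
      using j by (auto simp: coeff_poly_const[symmetric] coeff_eq_0)
    then have "map_poly (\<lambda>q. coeff q j) Q = 0"
      using inf poly_roots_finite finite_subset by blast
    then show ?thesis
      using coeff_map_poly[of "\<lambda>q. coeff q j" Q k] by simp
  qed
  show ?thesis
  proof (intro poly_eqI)
    fix k j
    show "coeff (coeff Q k) j = coeff (coeff (map_poly (\<lambda>x. [:x:]) (map_poly (\<lambda>p. coeff p 0) Q)) k) j"
      using coeff_coeff[of j k] by (cases j) (simp_all add: coeff_map_poly)
  qed
qed

lemma specialization_root_shift:
  fixes Q A :: "complex poly poly"
  assumes rel: "smult a (map_poly (\<lambda>q. pcompose q [:b, 1:]) Q * [:g, -1:]) = Q * A"
    and z: "poly (poly Q [:c:]) z = 0"
  shows "poly a z = 0 \<or> poly (poly Q [:c:]) (z + b) = 0 \<or> poly g z = c"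
proof -
  have "poly (poly (smult a (map_poly (\<lambda>q. pcompose q [:b, 1:]) Q * [:g, -1:])) [:c:]) z
      = poly (poly (Q * A) [:c:]) z"
    by (simp only: rel)
  then have "poly a z * (poly (poly Q [:c:]) (z + b) * (poly g z - c)) = 0"
    using z by (simp add: poly_map_poly_pcompose_const poly_pcompose algebra_simps)
  then show ?thesis by auto
qed

lemma real_if_shifted_quadratic_roots:
  fixes u w c :: complex
  assumes u: "u * u + u = c" and w: "w * w - w = c" and uw: "u - w = of_nat n"
  shows "c \<in> \<real>"
proof -
  have "(u + w) * (u - w + 1) = 0" using u w by (simp add: algebra_simps)
  moreover have "u - w + 1 \<noteq> 0" using uw by (metis of_nat_Suc of_nat_eq_0_iff add.commute nat.distinct(1))
  ultimately have "w = - u" by (simp add: add_eq_0_iff2)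
  then have "u = of_nat n / 2" using uw by (simp add: field_simps)
  moreover have "of_nat n / (2::complex) \<in> \<real>" by (intro Reals_divide) auto
  ultimately have "u \<in> \<real>" by (simp only:)
  then show ?thesis using u by (metis Reals_add Reals_mult)
qed

lemma nat_diff_if_same_int_class:
  fixes u w z0 :: complex
  assumes "u - z0 \<in> \<int>" "w - z0 \<in> \<int>" "Re w \<le> Re u"
  obtains n where "u - w = of_nat n"
proof -
  have "(u - z0) - (w - z0) \<in> \<int>" using assms(1,2) by (rule Ints_diff)
  then obtain k where k: "u - w = of_int k" by (auto elim: Ints_cases)
  have "k \<ge> 0" using assms(3) arg_cong[OF k, of Re] by simp
  then show ?thesis using k that[of "nat k"] by simp
qed

text \<open>Roots in one class z0 + Z with maximal and minimal real part cannot propagate, so they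
  satisfy both quadratic equations, which forces c to be real.\<close>
lemma poly_no_root_if_roots_shift:
  fixes h :: "complex poly"
  assumes h: "h \<noteq> 0" and c: "c \<notin> \<real>"
    and up: "\<And>z. poly h z = 0 \<Longrightarrow> poly h (z + 1) = 0 \<or> z * z + z = c"
    and down: "\<And>z. poly h z = 0 \<Longrightarrow> poly h (z - 1) = 0 \<or> z * z - z = c"
  shows "poly h z0 \<noteq> 0"
proof
  assume z0: "poly h z0 = 0"
  define R where "R = {z. poly h z = 0 \<and> z - z0 \<in> \<int>}"
  have R: "finite R" "R \<noteq> {}"
    unfolding R_def using poly_roots_finite[OF h] z0 by auto
  obtain u where u: "u \<in> R" and u_max: "\<And>z. z \<in> R \<Longrightarrow> Re z \<le> Re u"
    using ex_is_arg_min_if_finite[OF R, of "\<lambda>z. - Re z"] unfolding is_arg_min_def by force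
  obtain w where w: "w \<in> R" and w_min: "\<And>z. z \<in> R \<Longrightarrow> Re w \<le> Re z"
    using ex_is_arg_min_if_finite[OF R, of Re] unfolding is_arg_min_def by force
  have "poly h (u + 1) \<noteq> 0"
  proof
    assume root: "poly h (u + 1) = 0"
    have "u + 1 - z0 = (u - z0) + 1" by (simp add: algebra_simps)
    also have "\<dots> \<in> \<int>" using u unfolding R_def by (auto intro: Ints_add[OF _ Ints_1])
    finally have "u + 1 \<in> R" using root unfolding R_def by simp
    then show False using u_max[of "u + 1"] by simp
  qed
  then have u_eq: "u * u + u = c" using up u unfolding R_def by blast
  have "poly h (w - 1) \<noteq> 0"
  proof
    assume root: "poly h (w - 1) = 0"
    have "w - 1 - z0 = (w - z0) - 1" by (simp add: algebra_simps)
    also have "\<dots> \<in> \<int>" using w unfolding R_def by (auto intro: Ints_diff[OF _ Ints_1])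
    finally have "w - 1 \<in> R" using root unfolding R_def by simp
    then show False using w_min[of "w - 1"] by simp
  qed
  then have w_eq: "w * w - w = c" using down w unfolding R_def by blast
  obtain n where "u - w = of_nat n"
    using nat_diff_if_same_int_class[of u z0 w] u w w_min[OF u] unfolding R_def by blast
  with u_eq w_eq have "c \<in> \<real>" by (rule real_if_shifted_quadratic_roots)
  with c show False ..
qed

lemma infinite_nonreal_diff: "finite B \<Longrightarrow> infinite ({c :: complex. c \<notin> \<real>} - B)"
proof -
  assume B: "finite B"
  have "range (\<lambda>n::nat. \<i> * of_nat (Suc n)) \<subseteq> {c. c \<notin> \<real>}"
    by (auto simp: complex_is_Real_iff)
  moreover have "infinite (range (\<lambda>n::nat. \<i> * of_nat (Suc n)))"
    by (rule range_inj_infinite) (auto simp: inj_def)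
  ultimately have "infinite {c :: complex. c \<notin> \<real>}" by (rule infinite_super)
  then show ?thesis by (rule Diff_infinite_finite[OF B])
qed

context tffr
begin

definition min_Ann :: "complex poly poly \<Rightarrow> bool" where
  "min_Ann Q \<longleftrightarrow> Q \<in> Ann \<and> Q \<noteq> 0 \<and>
     (\<forall>R\<in>Ann. R \<noteq> 0 \<longrightarrow> degree Q \<le> degree R \<and>
        (degree R = degree Q \<longrightarrow> degree (lead_coeff Q) \<le> degree (lead_coeff R)))"

lemma min_Ann_exists: obtains Q where "min_Ann Q"
proof -
  obtain Q where Q: "Q \<noteq> 0 \<and> Q \<in> Ann" using Ann_nontrivial by blast
  obtain Q1 where Q1: "Q1 \<noteq> 0 \<and> Q1 \<in> Ann"
    and Q1_min: "\<And>R. R \<noteq> 0 \<and> R \<in> Ann \<Longrightarrow> degree Q1 \<le> degree R"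
    using ex_has_least_nat[of "\<lambda>Q. Q \<noteq> 0 \<and> Q \<in> Ann" Q degree] Q by blast
  obtain Q0 where Q0: "(Q0 \<noteq> 0 \<and> Q0 \<in> Ann) \<and> degree Q0 = degree Q1"
    and Q0_min: "\<And>R. (R \<noteq> 0 \<and> R \<in> Ann) \<and> degree R = degree Q1 \<Longrightarrow>
      degree (lead_coeff Q0) \<le> degree (lead_coeff R)"
    using ex_has_least_nat[of "\<lambda>Q. (Q \<noteq> 0 \<and> Q \<in> Ann) \<and> degree Q = degree Q1" Q1
        "\<lambda>Q. degree (lead_coeff Q)"] Q1
    by blast
  have "min_Ann Q0" unfolding min_Ann_def using Q0 Q0_min Q1_min by auto
  then show ?thesis by (rule that)
qed

lemma min_Ann_pseudo_dvd:
  assumes Q0: "min_Ann Q0" and R: "R \<in> Ann"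
  obtains a A where "a \<noteq> 0" "smult a R = Q0 * A"
proof -
  have nz: "Q0 \<noteq> 0" and Q0_Ann: "Q0 \<in> Ann" using Q0 unfolding min_Ann_def by auto
  obtain a q where a: "a \<noteq> 0" and aq: "smult a R = Q0 * q + pseudo_mod R Q0"
    using pseudo_mod(1)[OF nz, of R] by blast
  have "pseudo_mod R Q0 = smult a R - Q0 * q" using aq by simp
  then have "pseudo_mod R Q0 \<in> Ann"
    using Ann_diff Ann_smult[OF R] Ann_mult_right[OF Q0_Ann] by simp
  moreover have "pseudo_mod R Q0 = 0 \<or> degree (pseudo_mod R Q0) < degree Q0"
    using pseudo_mod(2)[OF nz, of R] by auto
  ultimately have "pseudo_mod R Q0 = 0" using Q0 unfolding min_Ann_def by fastforce
  then show ?thesis using that a aq by simp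
qed

text \<open>A factor z - r common to all coefficients could be cancelled by torsion freeness,
  lowering the z-degree of the leading coefficient.\<close>
lemma min_Ann_eval_nonzero:
  assumes Q0: "min_Ann Q0"
  shows "map_poly (\<lambda>q. poly q r) Q0 \<noteq> 0"
proof
  assume z: "map_poly (\<lambda>q. poly q r) Q0 = 0"
  let ?p = "[:-r, 1:] :: complex poly"
  have dvd: "?p dvd coeff Q0 k" for k
    using arg_cong[OF z, of "\<lambda>P. coeff P k"] by (simp add: coeff_map_poly poly_eq_0_iff_dvd)
  define Q' where "Q' = map_poly (\<lambda>q. q div ?p) Q0"
  have coeff_Q': "coeff Q' k = coeff Q0 k div ?p" for k
    unfolding Q'_def by (simp add: coeff_map_poly)
  have Q0_eq: "Q0 = smult ?p Q'"
    by (rule poly_eqI) (simp only: coeff_smult coeff_Q' dvd_mult_div_cancel[OF dvd])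
  have Q': "Q' \<in> Ann" "Q' \<noteq> 0" "degree Q' = degree Q0"
    using Ann_smult_cancel[of ?p Q'] Q0_eq Q0 unfolding min_Ann_def by auto
  have lc: "lead_coeff Q0 = ?p * lead_coeff Q'"
    using Q'(3) by (subst Q0_eq) (simp only: coeff_smult)
  have "degree (lead_coeff Q0) = Suc (degree (lead_coeff Q'))"
    unfolding lc using Q'(2) by (subst degree_mult_eq) auto
  then show False using Q0 Q' unfolding min_Ann_def by fastforce
qed

lemma Ann_shift:
  assumes Q: "Q \<in> Ann" and S: "endo S" and S': "endo S'"
    and L0S: "\<And>v. v \<in> V \<Longrightarrow> L0 (S v) = S (L0 v) + s a (S v)"
    and CasS: "\<And>v. v \<in> V \<Longrightarrow> Cas (S v) = S (Cas v)"
    and G: "\<And>v. v \<in> V \<Longrightarrow> bact G v = S (S' v)"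
  shows "map_poly (\<lambda>q. pcompose q [:-a, 1:]) Q * G \<in> Ann"
  unfolding Ann_def
proof (intro CollectI ballI)
  fix v assume v: "v \<in> V"
  have "bact (map_poly (\<lambda>q. pcompose q [:-a, 1:]) Q * G) v
      = bact (map_poly (\<lambda>q. pcompose q [:-a, 1:]) Q) (S (S' v))"
    using v by (simp add: bact_mult G)
  also have "\<dots> = S (bact Q (S' v))"
    using bact_pcompose_shift[OF S L0S CasS[symmetric]] S' v by simp
  also have "\<dots> = 0" using Q S S' v unfolding Ann_def by simp
  finally show "bact (map_poly (\<lambda>q. pcompose q [:-a, 1:]) Q * G) v = 0" .
qed

text \<open>The bivariate polynomials [:[:0, 1, 1:], -1:] and [:[:0, -1, 1:], -1:] are z^2 + z - C
  and z^2 - z - C.\<close>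
lemma bact_Lp_Lm: "v \<in> V \<Longrightarrow> bact [:[:0, 1, 1:], -1:] v = Lp (Lm v)"
  using endo_Cas by (simp add: bact_pCons bact_const pact_pCons[OF endo_L0] pact_neg
      Lp_Lm_eq_Cas algebra_simps)

lemma bact_Lm_Lp: "v \<in> V \<Longrightarrow> bact [:[:0, -1, 1:], -1:] v = Lm (Lp v)"
  using endo_Cas by (simp add: bact_pCons bact_const pact_pCons[OF endo_L0] pact_neg
      Lm_Lp_eq_Cas algebra_simps)

lemma Ann_shift_up:
  assumes "Q \<in> Ann"
  shows "map_poly (\<lambda>q. pcompose q [:1, 1:]) Q * [:[:0, 1, 1:], -1:] \<in> Ann"
proof -
  have "map_poly (\<lambda>q. pcompose q [:- (-1), 1:]) Q * [:[:0, 1, 1:], -1:] \<in> Ann"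
    by (rule Ann_shift[OF assms endo_Lp endo_Lm _ Cas_commute_Lp bact_Lp_Lm]) (simp add: L0_Lp)
  then show ?thesis by (simp only: minus_minus)
qed

lemma Ann_shift_down:
  assumes "Q \<in> Ann"
  shows "map_poly (\<lambda>q. pcompose q [:-1, 1:]) Q * [:[:0, -1, 1:], -1:] \<in> Ann"
  by (rule Ann_shift[OF assms endo_Lm endo_Lp _ Cas_commute_Lm bact_Lm_Lp]) (simp add: L0_Lm)

lemma min_Ann_roots_shift:
  assumes Q0: "min_Ann Q0"
  obtains a where "a \<noteq> 0"
    "\<And>c z. poly (poly Q0 [:c:]) z = 0 \<Longrightarrow>
      poly a z = 0 \<or> poly (poly Q0 [:c:]) (z + 1) = 0 \<or> z * z + z = c"
    "\<And>c z. poly (poly Q0 [:c:]) z = 0 \<Longrightarrow>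
      poly a z = 0 \<or> poly (poly Q0 [:c:]) (z - 1) = 0 \<or> z * z - z = c"
proof -
  have Q0_Ann: "Q0 \<in> Ann" using Q0 unfolding min_Ann_def by blast
  obtain a1 A1 where a1: "a1 \<noteq> 0"
    and up: "smult a1 (map_poly (\<lambda>q. pcompose q [:1, 1:]) Q0 * [:[:0, 1, 1:], -1:]) = Q0 * A1"
    using min_Ann_pseudo_dvd[OF Q0 Ann_shift_up[OF Q0_Ann]] by blast
  obtain a2 A2 where a2: "a2 \<noteq> 0"
    and down: "smult a2 (map_poly (\<lambda>q. pcompose q [:-1, 1:]) Q0 * [:[:0, -1, 1:], -1:]) = Q0 * A2"
    using min_Ann_pseudo_dvd[OF Q0 Ann_shift_down[OF Q0_Ann]] by blast
  show ?thesis
  proof (rule that[of "a1 * a2"])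
    show "a1 * a2 \<noteq> 0" using a1 a2 by simp
  next
    fix c z assume "poly (poly Q0 [:c:]) z = 0"
    from specialization_root_shift[OF up this]
    show "poly (a1 * a2) z = 0 \<or> poly (poly Q0 [:c:]) (z + 1) = 0 \<or> z * z + z = c"
      by (auto simp: algebra_simps)
  next
    fix c z assume "poly (poly Q0 [:c:]) z = 0"
    from specialization_root_shift[OF down this]
    show "poly (a1 * a2) z = 0 \<or> poly (poly Q0 [:c:]) (z - 1) = 0 \<or> z * z - z = c"
      by (auto simp: algebra_simps)
  qed
qed

lemma min_Ann_const_specializations:
  assumes Q0: "min_Ann Q0"
  shows "infinite {c. degree (poly Q0 [:c:]) = 0}"
proof -
  obtain a where a: "a \<noteq> 0"
    and up: "\<And>c z. poly (poly Q0 [:c:]) z = 0 \<Longrightarrow>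
      poly a z = 0 \<or> poly (poly Q0 [:c:]) (z + 1) = 0 \<or> z * z + z = c"
    and down: "\<And>c z. poly (poly Q0 [:c:]) z = 0 \<Longrightarrow>
      poly a z = 0 \<or> poly (poly Q0 [:c:]) (z - 1) = 0 \<or> z * z - z = c"
    using min_Ann_roots_shift[OF Q0] by blast
  define B where "B = (\<Union>r\<in>insert 0 {r. poly a r = 0}. {c. poly (poly Q0 [:c:]) r = 0})"
  have "finite B"
    unfolding B_def poly_poly_const
    using poly_roots_finite[OF a] poly_roots_finite[OF min_Ann_eval_nonzero[OF Q0]] by blast
  have "{c. c \<notin> \<real>} - B \<subseteq> {c. degree (poly Q0 [:c:]) = 0}"
  proof
    fix c assume c: "c \<in> {c. c \<notin> \<real>} - B"
    have h: "poly Q0 [:c:] \<noteq> 0" using c unfolding B_def by force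
    have "poly (poly Q0 [:c:]) z \<noteq> 0" for z
    proof (rule poly_no_root_if_roots_shift[OF h])
      show "c \<notin> \<real>" using c by blast
    next
      fix z assume "poly (poly Q0 [:c:]) z = 0"
      with up[OF this] c show "poly (poly Q0 [:c:]) (z + 1) = 0 \<or> z * z + z = c"
        unfolding B_def by blast
    next
      fix z assume "poly (poly Q0 [:c:]) z = 0"
      with down[OF this] c show "poly (poly Q0 [:c:]) (z - 1) = 0 \<or> z * z - z = c"
        unfolding B_def by blast
    qed
    then show "c \<in> {c. degree (poly Q0 [:c:]) = 0}"
      using fundamental_theorem_of_algebra constant_degree by blast
  qed
  then show ?thesis by (rule infinite_super) (rule infinite_nonreal_diff[OF \<open>finite B\<close>])
qed

lemma Cas_annihilating_poly:
  obtains q where "q \<noteq> 0" "\<And>v. v \<in> V \<Longrightarrow> pact Cas q v = 0"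
proof -
  obtain Q0 where Q0: "min_Ann Q0" by (rule min_Ann_exists)
  define q where "q = map_poly (\<lambda>p. coeff p 0) Q0"
  have Q0_eq: "Q0 = map_poly (\<lambda>x. [:x:]) q"
    unfolding q_def
    by (rule eq_map_poly_const_if_infinite_const_specializations[OF min_Ann_const_specializations[OF Q0]])
  have "q \<noteq> 0" using Q0_eq Q0 unfolding min_Ann_def by auto
  moreover have "pact Cas q v = 0" if "v \<in> V" for v
    using Q0 that bact_map_poly_const[of q v] Q0_eq unfolding min_Ann_def Ann_def by auto
  ultimately show ?thesis by (rule that)
qed

end

lemma coprime_bezout_one:
  fixes p q :: "'a::euclidean_ring_gcd"
  assumes "coprime p q"
  obtains x y where "x * p + y * q = 1"
  using bezout_coefficients_fst_snd[of p q] assms by (auto simp: coprime_iff_gcd_eq_1)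

lemma coprime_linear_power:
  assumes "\<alpha> \<noteq> \<beta>"
  shows "coprime ([:-\<alpha>, 1:] ^ m :: complex poly) ([:-\<beta>, 1:] ^ n)"
proof -
  have "coprime ([:-\<alpha>, 1:] :: complex poly) [:-\<beta>, 1:]"
  proof (rule coprimeI)
    fix d assume "d dvd [:-\<alpha>, 1:]" "d dvd [:-\<beta>, 1:]"
    then have "d dvd [:\<alpha> - \<beta>:]" using dvd_diff[of d "[:-\<beta>, 1:]" "[:-\<alpha>, 1:]"] by simp
    moreover have "is_unit [:\<alpha> - \<beta>:]" using assms by (simp add: is_unit_const_poly_iff dvd_field_iff)
    ultimately show "is_unit d" by (rule dvd_unit_imp_unit)
  qed
  then show ?thesis by simp
qed

context vs_subspace
begin

context
  fixes T assumes T: "endo T"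
begin

lemma pact_coprime_eq_0:
  assumes pq: "coprime p q" and v: "v \<in> V" and "pact T p v = 0" "pact T q v = 0"
  shows "v = 0"
proof -
  obtain x y where "x * p + y * q = 1" using coprime_bezout_one[OF pq] .
  then have "v = pact T x (pact T p v) + pact T y (pact T q v)"
    using v T by (metis pact_1 pact_add pact_mult)
  with assms T show ?thesis by simp
qed

lemma pact_coprime_split:
  assumes pq: "coprime p q" and v: "v \<in> V" and pqv: "pact T (p * q) v = 0"
  obtains v1 v2 where "v1 \<in> V" "v2 \<in> V" "pact T p v1 = 0" "pact T q v2 = 0" "v = v1 + v2"
proof -
  obtain x y where xy: "x * p + y * q = 1" using coprime_bezout_one[OF pq] .
  have "pact T p (pact T (y * q) v) = pact T y (pact T (p * q) v)"
    using v T by (simp add: pact_mult[symmetric] ac_simps)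
  moreover have "pact T q (pact T (x * p) v) = pact T x (pact T (p * q) v)"
    using v T by (simp add: pact_mult[symmetric] ac_simps)
  moreover have "v = pact T (y * q) v + pact T (x * p) v"
    using xy pact_add[of T "y * q" "x * p" v] by (simp add: add.commute)
  ultimately show ?thesis
    using that[of "pact T (y * q) v" "pact T (x * p) v"] pqv v T by (simp add: pact_0_right[OF T])
qed

lemma pact_prod_decomposition:
  assumes "finite M"
  shows "(\<And>\<alpha> \<beta>. \<alpha> \<in> M \<Longrightarrow> \<beta> \<in> M \<Longrightarrow> \<alpha> \<noteq> \<beta> \<Longrightarrow> coprime (P \<alpha>) (P \<beta>)) \<Longrightarrow>
    v \<in> V \<Longrightarrow> pact T (\<Prod>\<mu>\<in>M. P \<mu>) v = 0 \<Longrightarrow>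
    \<exists>w. (\<forall>\<mu>\<in>M. w \<mu> \<in> V \<and> pact T (P \<mu>) (w \<mu>) = 0) \<and> v = (\<Sum>\<mu>\<in>M. w \<mu>)"
  using assms
proof (induct M arbitrary: v rule: finite_induct)
  case (insert \<alpha> M)
  have "coprime (P \<alpha>) (\<Prod>\<mu>\<in>M. P \<mu>)"
    using insert by (intro prod_coprime_right) auto
  moreover have "pact T (P \<alpha> * (\<Prod>\<mu>\<in>M. P \<mu>)) v = 0" using insert by simp
  ultimately obtain v1 v2 where v1: "v1 \<in> V" "pact T (P \<alpha>) v1 = 0"
    and v2: "v2 \<in> V" "pact T (\<Prod>\<mu>\<in>M. P \<mu>) v2 = 0" and v: "v = v1 + v2"
    using pact_coprime_split insert.prems(2) by metis
  obtain w where w: "\<forall>\<mu>\<in>M. w \<mu> \<in> V \<and> pact T (P \<mu>) (w \<mu>) = 0" "v2 = (\<Sum>\<mu>\<in>M. w \<mu>)"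
    using insert.hyps(3)[OF _ v2] insert.prems(1) by blast
  have "(\<Sum>\<mu>\<in>M. (w(\<alpha> := v1)) \<mu>) = (\<Sum>\<mu>\<in>M. w \<mu>)"
    using insert.hyps(2) by (intro sum.cong) auto
  then show ?case
    using w v1 v insert.hyps by (intro exI[of _ "w(\<alpha> := v1)"]) auto
qed simp

lemma pact_coprime_family_independent:
  assumes M: "finite M"
    and coprime: "\<And>\<alpha> \<beta>. \<alpha> \<in> M \<Longrightarrow> \<beta> \<in> M \<Longrightarrow> \<alpha> \<noteq> \<beta> \<Longrightarrow> coprime (P \<alpha>) (P \<beta>)"
    and w: "\<And>\<mu>. \<mu> \<in> M \<Longrightarrow> w \<mu> \<in> V \<and> pact T (P \<mu>) (w \<mu>) = 0"
    and sum_0: "(\<Sum>\<mu>\<in>M. w \<mu>) = 0" and \<nu>: "\<nu> \<in> M"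
  shows "w \<nu> = 0"
proof (rule pact_coprime_eq_0)
  let ?F = "\<Prod>\<mu>\<in>M - {\<nu>}. P \<mu>"
  show "coprime (P \<nu>) ?F" using coprime \<nu> by (intro prod_coprime_right) auto
  show "w \<nu> \<in> V" "pact T (P \<nu>) (w \<nu>) = 0" using w \<nu> by auto
  have kill: "pact T ?F (w \<mu>) = 0" if "\<mu> \<in> M - {\<nu>}" for \<mu>
  proof -
    have "?F = (\<Prod>\<mu>'\<in>M - {\<nu>} - {\<mu>}. P \<mu>') * P \<mu>"
      using that M by (simp add: prod.remove mult.commute)
    then show ?thesis using w[of \<mu>] that T by (simp add: pact_mult)
  qed
  have "0 = pact T ?F (\<Sum>\<mu>\<in>M. w \<mu>)" using sum_0 T by simp
  also have "\<dots> = (\<Sum>\<mu>\<in>M. pact T ?F (w \<mu>))"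
    using w by (intro endo_sum[OF endo_pact[OF T]]) blast
  also have "\<dots> = pact T ?F (w \<nu>) + (\<Sum>\<mu>\<in>M - {\<nu>}. pact T ?F (w \<mu>))"
    using M \<nu> by (simp add: sum.remove)
  finally show "pact T ?F (w \<nu>) = 0" using kill by simp
qed

end

end

lemma tffr_module_submodule:
  assumes V: "tffr_module s V Lm L0 Lp" and W: "sl2_submodule s W V Lm L0 Lp"
  shows "tffr_module s W Lm L0 Lp"
proof -
  have WV: "W \<subseteq> V" using W unfolding sl2_submodule_def by auto
  have "sl2_module s W Lm L0 Lp"
    using V W WV unfolding tffr_module_def sl2_module_def sl2_submodule_def lin_on_def
    by (simp add: subset_eq)
  moreover have "torsion_free s W L0"
    using V WV unfolding tffr_module_def torsion_free_def by blast
  moreover have "finite_rank s W L0"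
    using V WV unfolding tffr_module_def finite_rank_def by (meson order_trans)
  ultimately show ?thesis unfolding tffr_module_def by blast
qed

context tffr
begin

definition gen_eigenspace_Cas :: "nat \<Rightarrow> complex \<Rightarrow> 'v set" where
  "gen_eigenspace_Cas n \<mu> = {v \<in> V. pact Cas ([:-\<mu>, 1:] ^ n) v = 0}"

lemma gen_eigenspace_Cas_submodule: "sl2_submodule s (gen_eigenspace_Cas n \<mu>) V Lm L0 Lp"
proof -
  let ?P = "pact Cas ([:-\<mu>, 1:] ^ n)"
  have "subspace (gen_eigenspace_Cas n \<mu>)"
    unfolding gen_eigenspace_Cas_def subspace_def using endo_pact[OF endo_Cas] by simp
  moreover have "?P (L v) = L (?P v)"
    if L: "endo L" and "\<And>v. v \<in> V \<Longrightarrow> Cas (L v) = L (Cas v)" and "v \<in> V" for L v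
    using pact_commute[OF endo_Cas L] that by simp
  ultimately show ?thesis
    unfolding sl2_submodule_def gen_eigenspace_Cas_def
    using Cas_commute_Lm Cas_commute_L0 Cas_commute_Lp endo_Lm endo_L0 endo_Lp
    by (auto simp: image_subset_iff)
qed

lemma gen_eigenspace_Cas_gen_casimir:
  assumes "n \<ge> 1"
  shows "gen_casimir_tffr \<mu> s (gen_eigenspace_Cas n \<mu>) Lm L0 Lp"
  unfolding gen_casimir_tffr_def
proof (intro conjI exI[of _ n] ballI)
  show "tffr_module s (gen_eigenspace_Cas n \<mu>) Lm L0 Lp"
    using tffr_module_submodule gen_eigenspace_Cas_submodule sl2_module torsion_free finite_rank
    unfolding tffr_module_def by blast
  fix v assume "v \<in> gen_eigenspace_Cas n \<mu>"
  then have "v \<in> V" "pact Cas ([:-\<mu>, 1:] ^ n) v = 0" unfolding gen_eigenspace_Cas_def by auto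
  then show "((\<lambda>x. casimir Lm L0 Lp x - s \<mu> x) ^^ n) v = 0"
    using pact_linear_power[OF endo_Cas, of v \<mu> n] unfolding Cas_def by simp
qed (rule assms)

text \<open>By the Nullstellensatz q divides the (deg q + 1)-th power of its radical.\<close>
lemma Cas_annihilated_by_linear_powers:
  obtains M n where "finite M" "n \<ge> 1" "\<And>v. v \<in> V \<Longrightarrow> pact Cas (\<Prod>\<mu>\<in>M. [:-\<mu>, 1:] ^ n) v = 0"
proof -
  obtain q where q: "q \<noteq> 0" "\<And>v. v \<in> V \<Longrightarrow> pact Cas q v = 0"
    by (rule Cas_annihilating_poly) blast
  define M where "M = {\<mu>. poly q \<mu> = 0}"
  define n where "n = Suc (degree q)"
  have M: "finite M" unfolding M_def by (rule poly_roots_finite[OF q(1)])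
  have "q dvd (\<Prod>\<mu>\<in>M. [:-\<mu>, 1:]) ^ degree q"
    using nullstellensatz_univariate[of q "\<Prod>\<mu>\<in>M. [:-\<mu>, 1:]"] q(1) M
    by (auto simp: M_def poly_prod prod_zero_iff)
  also have "\<dots> dvd (\<Prod>\<mu>\<in>M. [:-\<mu>, 1:]) ^ n" unfolding n_def by (rule le_imp_power_dvd) simp
  finally have "q dvd (\<Prod>\<mu>\<in>M. [:-\<mu>, 1:] ^ n)" by (simp add: prod_power_distrib)
  then obtain t where t: "(\<Prod>\<mu>\<in>M. [:-\<mu>, 1:] ^ n) = t * q" by (metis dvdE mult.commute)
  have prod_0: "pact Cas (\<Prod>\<mu>\<in>M. [:-\<mu>, 1:] ^ n) v = 0" if "v \<in> V" for v
    unfolding t using q(2)[OF that] that endo_Cas by (simp add: pact_mult)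
  show ?thesis by (rule that[OF M _ prod_0]) (simp add: n_def)
qed

lemma Cas_primary_decomposition:
  obtains M n where "finite M" "n \<ge> 1"
    "\<forall>v\<in>V. \<exists>!w. (\<forall>\<mu>\<in>M. w \<mu> \<in> gen_eigenspace_Cas n \<mu>) \<and> (\<forall>\<mu>. \<mu> \<notin> M \<longrightarrow> w \<mu> = 0) \<and>
        v = (\<Sum>\<mu>\<in>M. w \<mu>)"
proof -
  obtain M n where M: "finite M" and n: "n \<ge> 1"
    and prod_0: "\<And>v. v \<in> V \<Longrightarrow> pact Cas (\<Prod>\<mu>\<in>M. [:-\<mu>, 1:] ^ n) v = 0"
    by (rule Cas_annihilated_by_linear_powers) blast
  let ?P = "\<lambda>\<mu>. [:-\<mu>, 1:] ^ n :: complex poly"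
  let ?E = "gen_eigenspace_Cas n"
  have coprime: "\<And>\<alpha> \<beta>. \<alpha> \<noteq> \<beta> \<Longrightarrow> coprime (?P \<alpha>) (?P \<beta>)"
    by (rule coprime_linear_power)
  have unique: "\<exists>!w. (\<forall>\<mu>\<in>M. w \<mu> \<in> ?E \<mu>) \<and> (\<forall>\<mu>. \<mu> \<notin> M \<longrightarrow> w \<mu> = 0) \<and> v = (\<Sum>\<mu>\<in>M. w \<mu>)"
    if v: "v \<in> V" for v
  proof -
    obtain w where w: "\<forall>\<mu>\<in>M. w \<mu> \<in> V \<and> pact Cas (?P \<mu>) (w \<mu>) = 0" "v = (\<Sum>\<mu>\<in>M. w \<mu>)"
      using pact_prod_decomposition[OF endo_Cas M coprime v prod_0[OF v]] by blast
    show ?thesis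
    proof (rule ex1I[of _ "\<lambda>\<mu>. if \<mu> \<in> M then w \<mu> else 0"])
      show "(\<forall>\<mu>\<in>M. (if \<mu> \<in> M then w \<mu> else 0) \<in> ?E \<mu>) \<and>
          (\<forall>\<mu>. \<mu> \<notin> M \<longrightarrow> (if \<mu> \<in> M then w \<mu> else 0) = 0) \<and>
          v = (\<Sum>\<mu>\<in>M. if \<mu> \<in> M then w \<mu> else 0)"
        using w unfolding gen_eigenspace_Cas_def by auto
    next
      fix w' assume w': "(\<forall>\<mu>\<in>M. w' \<mu> \<in> ?E \<mu>) \<and> (\<forall>\<mu>. \<mu> \<notin> M \<longrightarrow> w' \<mu> = 0) \<and>
          v = (\<Sum>\<mu>\<in>M. w' \<mu>)"
      have "w' \<mu> - w \<mu> = 0" if "\<mu> \<in> M" for \<mu>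
      proof (rule pact_coprime_family_independent[OF endo_Cas M coprime _ _ that])
        show "\<And>\<mu>. \<mu> \<in> M \<Longrightarrow> w' \<mu> - w \<mu> \<in> V \<and> pact Cas (?P \<mu>) (w' \<mu> - w \<mu>) = 0"
          using w w' endo_pact[OF endo_Cas] unfolding gen_eigenspace_Cas_def by auto
        show "(\<Sum>\<mu>\<in>M. w' \<mu> - w \<mu>) = 0" using w w' by (simp add: sum_subtractf)
      qed
      with w' show "w' = (\<lambda>\<mu>. if \<mu> \<in> M then w \<mu> else 0)" by auto
    qed
  qed
  show ?thesis using that[OF M n ballI[OF unique]] .
qed

end

lemma sl2I: "sl2_module s V Lm L0 Lp \<Longrightarrow> sl2 s V Lm L0 Lp"
  unfolding sl2_def vs_subspace_def vs_subspace_axioms_def sl2_axioms_def by (auto simp: sl2_module_def)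

lemma tffrI: "tffr_module s V Lm L0 Lp \<Longrightarrow> tffr s V Lm L0 Lp"
  unfolding tffr_def tffr_axioms_def tffr_module_def using sl2I by blast

lemma (in tffr) casimir_decomposition:
  "\<exists>M W. finite M \<and>
     (\<forall>\<mu>\<in>M. sl2_submodule s (W \<mu>) V Lm L0 Lp \<and> gen_casimir_tffr \<mu> s (W \<mu>) Lm L0 Lp) \<and>
     (\<forall>v\<in>V. \<exists>!w. (\<forall>\<mu>\<in>M. w \<mu> \<in> W \<mu>) \<and> (\<forall>\<mu>. \<mu> \<notin> M \<longrightarrow> w \<mu> = 0) \<and> v = (\<Sum>\<mu>\<in>M. w \<mu>))"
proof -
  obtain M n where M: "finite M" and n: "n \<ge> 1" and unique:
    "\<forall>v\<in>V. \<exists>!w. (\<forall>\<mu>\<in>M. w \<mu> \<in> gen_eigenspace_Cas n \<mu>) \<and> (\<forall>\<mu>. \<mu> \<notin> M \<longrightarrow> w \<mu> = 0) \<and>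
        v = (\<Sum>\<mu>\<in>M. w \<mu>)"
    by (rule Cas_primary_decomposition)
  show ?thesis
  proof (intro exI[of _ M] exI[of _ "gen_eigenspace_Cas n"] conjI)
    show "\<forall>\<mu>\<in>M. sl2_submodule s (gen_eigenspace_Cas n \<mu>) V Lm L0 Lp \<and>
        gen_casimir_tffr \<mu> s (gen_eigenspace_Cas n \<mu>) Lm L0 Lp"
      using gen_eigenspace_Cas_submodule gen_eigenspace_Cas_gen_casimir[OF n] by blast
  qed (rule M unique)+
qed

lemma sl2_hom_0:
  assumes A: "sl2_module sA A Am A0 Ap" and f: "sl2_hom sA A Am A0 Ap sB B Bm B0 Bp f"
  shows "f 0 = 0"
proof -
  interpret a: sl2 sA A Am A0 Ap by (rule sl2I[OF A])
  have "f (0 + 0) = f 0 + f 0" using f a.zero_in_V unfolding sl2_hom_def lin_on_def by blast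
  then show ?thesis by simp
qed

lemma sl2_hom_casimir_shift_funpow:
  assumes A: "sl2_module sA A Am A0 Ap" and B: "sl2_module sB B Bm B0 Bp"
    and f: "sl2_hom sA A Am A0 Ap sB B Bm B0 Bp f" and v: "v \<in> A"
  shows "f (((\<lambda>x. casimir Am A0 Ap x - sA \<mu> x) ^^ n) v)
    = ((\<lambda>x. casimir Bm B0 Bp x - sB \<mu> x) ^^ n) (f v)"
  using v
proof (induct n arbitrary: v)
  case (Suc n)
  interpret a: sl2 sA A Am A0 Ap by (rule sl2I[OF A])
  interpret b: sl2 sB B Bm B0 Bp by (rule sl2I[OF B])
  have f_diff: "f (x - y) = f x - f y" if "x \<in> A" "y \<in> A" for x y
    using f that unfolding sl2_hom_def lin_on_def by (metis a.diff_in_V diff_add_cancel eq_diff_eq)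
  have f_scale: "f (sA c x) = sB c (f x)" if "x \<in> A" for c x
    using f that unfolding sl2_hom_def lin_on_def by blast
  have f_L: "f (Am x) = Bm (f x)" "f (A0 x) = B0 (f x)" "f (Ap x) = Bp (f x)" if "x \<in> A" for x
    using f that unfolding sl2_hom_def by blast+
  have "f (casimir Am A0 Ap x - sA \<mu> x) = casimir Bm B0 Bp (f x) - sB \<mu> (f x)" if "x \<in> A" for x
    using that unfolding casimir_def by (simp add: f_diff f_scale f_L)
  moreover have "((\<lambda>x. casimir Am A0 Ap x - sA \<mu> x) ^^ n) v \<in> A"
    using Suc.prems a.funpow_in_V[OF a.endo_minus[OF a.endo_Cas a.endo_scalar]] unfolding a.Cas_def by blast
  ultimately show ?case using Suc by simp
qed simp

lemma gen_casimir_hom_eq_0: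
  assumes ne: "\<mu> \<noteq> \<nu>" and gA: "gen_casimir_tffr \<mu> sA A Am A0 Ap"
    and gB: "gen_casimir_tffr \<nu> sB B Bm B0 Bp"
    and f: "sl2_hom sA A Am A0 Ap sB B Bm B0 Bp f" and v: "v \<in> A"
  shows "f v = 0"
proof -
  have A: "sl2_module sA A Am A0 Ap" and B: "sl2_module sB B Bm B0 Bp"
    using gA gB unfolding gen_casimir_tffr_def tffr_module_def by blast+
  interpret b: sl2 sB B Bm B0 Bp by (rule sl2I[OF B])
  obtain n where n: "\<forall>v\<in>A. ((\<lambda>x. casimir Am A0 Ap x - sA \<mu> x) ^^ n) v = 0"
    using gA unfolding gen_casimir_tffr_def by blast
  obtain m where m: "\<forall>w\<in>B. ((\<lambda>x. casimir Bm B0 Bp x - sB \<nu> x) ^^ m) w = 0"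
    using gB unfolding gen_casimir_tffr_def by blast
  have fv: "f v \<in> B" using f v unfolding sl2_hom_def by blast
  have "poly_act sB b.Cas ([:-\<mu>, 1:] ^ n) (f v) = 0"
    using b.pact_linear_power[OF b.endo_Cas fv] sl2_hom_casimir_shift_funpow[OF A B f v, where \<mu>=\<mu> and n=n]
      n v sl2_hom_0[OF A f] unfolding b.Cas_def by simp
  moreover have "poly_act sB b.Cas ([:-\<nu>, 1:] ^ m) (f v) = 0"
    using b.pact_linear_power[OF b.endo_Cas fv] m fv unfolding b.Cas_def by simp
  ultimately show ?thesis
    using b.pact_coprime_eq_0[OF b.endo_Cas coprime_linear_power[OF ne] fv] by blast
qed

theorem theorem7p9:
  shows
   "(\<forall>(s :: complex \<Rightarrow> 'v::ab_group_add \<Rightarrow> 'v) V Lm L0 Lp.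
       tffr_module s V Lm L0 Lp \<longrightarrow>
       (\<exists>M :: complex set. \<exists>W :: complex \<Rightarrow> 'v set.
          finite M \<and>
          (\<forall>\<mu>\<in>M. sl2_submodule s (W \<mu>) V Lm L0 Lp \<and> gen_casimir_tffr \<mu> s (W \<mu>) Lm L0 Lp) \<and>
          (\<forall>v\<in>V. \<exists>!w :: complex \<Rightarrow> 'v.
              (\<forall>\<mu>\<in>M. w \<mu> \<in> W \<mu>) \<and> (\<forall>\<mu>. \<mu> \<notin> M \<longrightarrow> w \<mu> = 0) \<and>
              v = (\<Sum>\<mu>\<in>M. w \<mu>))))
    \<and>
    (\<forall>\<mu> \<nu> (sA :: complex \<Rightarrow> 'a::ab_group_add \<Rightarrow> 'a) A Am A0 Ap
          (sB :: complex \<Rightarrow> 'b::ab_group_add \<Rightarrow> 'b) B Bm B0 Bp f.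
       \<mu> \<noteq> \<nu> \<longrightarrow> gen_casimir_tffr \<mu> sA A Am A0 Ap \<longrightarrow> gen_casimir_tffr \<nu> sB B Bm B0 Bp \<longrightarrow>
       sl2_hom sA A Am A0 Ap sB B Bm B0 Bp f \<longrightarrow> (\<forall>v\<in>A. f v = 0))"
  apply (intro conjI allI impI ballI)
   apply (erule tffr.casimir_decomposition[OF tffrI])
  by (rule gen_casimir_hom_eq_0)

end
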